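(* Let $n\ge1$, $U=\mathcal{U}(osp(1|2n))$ and $\Omega\subset U$ as defined below. For every $a\in\{1,\dots,2n\}$, $\sigma_a\triangleright\Omega\subset\Omega$. Consequently the action $\triangleright$ makes $\Omega$ an $osp(1|2n)$-submodule of $U$.
   Context: $\mathcal{U}(osp(1|2n))$ is the associative superalgebra over $\mathbb{C}$ generated by odd elements $\sigma_a$ and even elements $\sigma_{ab}=\sigma_{ba}$ ($1\le a,b\le 2n$) subject to $\{\sigma_a,\sigma_b\}=\sigma_{ab}$, $[\sigma_a,\sigma_{bc}]=-g_{ab}\sigma_c-g_{ac}\sigma_b$, $[\sigma_{ab},\sigma_{cd}]=-g_{ac}\sigma_{bd}-g_{ad}\sigma_{bc}-g_{bc}\sigma_{ad}-g_{bd}\sigma_{ac}$, where $(g_{ab})=\begin{pmatrix}0&-I_n\\ I_n&0\end{pmatrix}$. The action $\triangleright$ on homogeneous $x\in U$ is: $\sigma_{ab}\triangleright x=[\sigma_{ab},x]$; $\sigma_a\triangleright x=\sigma_ax+x\sigma_a$ if $x$ is even; $\sigma_a\triangleright x=\sigma_ax-x\sigma_a$ if $x$ is odd. This action satisfies $\{\sigma_a,\sigma_b\}\triangleright x=\sigma_a\triangleright(\sigma_b\triangleright x)+\sigma_b\triangleright(\sigma_a\triangleright x)$ and the analogous identities for the other relations, so it makes $U$ an $osp(1|2n)$-module. For indices $a_1,\dots,a_p$, $[a_1\dots a_p]=\sum_{s\in\mathfrak{S}_p}\varepsilon(s)\sigma_{a_{s(1)}}\cdots\sigma_{a_{s(p)}}$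 ($[\,]=1$ for $p=0$), and $\Omega$ is the span of these for $0\le p\le 2n$. *)

theory Defs
  imports Complex_Main "HOL-Library.Function_Algebras" "HOL-Combinatorics.Permutations"
begin

text \<open>Generators of the free associative algebra: odd generators sigma_a (Odd a)
 and even generators sigma_ab (Even a b). Indices are meant to range over 1..2n.\<close>
datatype osp_gen = Odd nat | Even nat nat

text \<open>Free associative algebra over the complex numbers on these generators:
 an element is a coefficient function on words (noncommutative monomials).
 Addition/subtraction are pointwise (Function_Algebras); only finitely supported
 elements ever arise below.\<close>
type_synonym fa = "osp_gen list \<Rightarrow> complex"

definition mon :: "osp_gen list \<Rightarrow> fa" where
  "mon u = (\<lambda>w. if w = u then 1 else 0)"

definition fscale :: "complex \<Rightarrow> fa \<Rightarrow> fa" where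
  "fscale c x = (\<lambda>w. c * x w)"

definition fmul :: "fa \<Rightarrow> fa \<Rightarrow> fa" where
  "fmul x y = (\<lambda>w. \<Sum>i\<le>length w. x (take i w) * y (drop i w))"

definition fspan :: "fa set \<Rightarrow> fa set" where
  "fspan S = {x. \<exists>F c. finite F \<and> F \<subseteq> S \<and> x = (\<Sum>v\<in>F. fscale (c v) v)}"

definition sig :: "nat \<Rightarrow> fa" where "sig a = mon [Odd a]"
definition sig2 :: "nat \<Rightarrow> nat \<Rightarrow> fa" where "sig2 a b = mon [Even a b]"

text \<open>The bilinear form g = ((0, -I_n), (I_n, 0)) on indices 1..2n.\<close>
definition g :: "nat \<Rightarrow> nat \<Rightarrow> nat \<Rightarrow> complex" where
  "g n a b = (if 1 \<le> a \<and> a \<le> n \<and> b = a + n then -1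
              else if n < a \<and> a \<le> 2*n \<and> b + n = a then 1 else 0)"

definition comm :: "fa \<Rightarrow> fa \<Rightarrow> fa" where "comm x y = fmul x y - fmul y x"
definition acomm :: "fa \<Rightarrow> fa \<Rightarrow> fa" where "acomm x y = fmul x y + fmul y x"

text \<open>Defining relations of U(osp(1|2n)) (as elements to be set to zero).\<close>
definition rels :: "nat \<Rightarrow> fa set" where
  "rels n =
     {sig2 a b - sig2 b a | a b. a \<in> {1..2*n} \<and> b \<in> {1..2*n}}
   \<union> {acomm (sig a) (sig b) - sig2 a b | a b. a \<in> {1..2*n} \<and> b \<in> {1..2*n}}
   \<union> {comm (sig a) (sig2 b c) + fscale (g n a b) (sig c) + fscale (g n a c) (sig b)
       | a b c. a \<in> {1..2*n} \<and> b \<in> {1..2*n} \<and> c \<in> {1..2*n}}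
   \<union> {comm (sig2 a b) (sig2 c d) + fscale (g n a c) (sig2 b d) + fscale (g n a d) (sig2 b c)
         + fscale (g n b c) (sig2 a d) + fscale (g n b d) (sig2 a c)
       | a b c d. a \<in> {1..2*n} \<and> b \<in> {1..2*n} \<and> c \<in> {1..2*n} \<and> d \<in> {1..2*n}}"

text \<open>Two-sided ideal generated by the relations; U(osp(1|2n)) = free algebra / I.\<close>
definition Iideal :: "nat \<Rightarrow> fa set" where
  "Iideal n = fspan {fmul (mon u) (fmul r (mon v)) | u r v. r \<in> rels n}"

text \<open>Z2-grading: a word is odd iff it contains an odd number of odd generators.
 The relations are homogeneous, so this grading descends to U.\<close>
definition odd_word :: "osp_gen list \<Rightarrow> bool" where
  "odd_word w = odd (length (filter (\<lambda>x. case x of Odd _ \<Rightarrow> True | Even _ _ \<Rightarrow> False) w))"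

definition even_part :: "fa \<Rightarrow> fa" where
  "even_part x = (\<lambda>w. if odd_word w then 0 else x w)"
definition odd_part :: "fa \<Rightarrow> fa" where
  "odd_part x = (\<lambda>w. if odd_word w then x w else 0)"

text \<open>The action (extended linearly from homogeneous elements).\<close>
definition act_odd :: "nat \<Rightarrow> fa \<Rightarrow> fa" where
  "act_odd a x = acomm (sig a) (even_part x) + comm (sig a) (odd_part x)"
definition act_even :: "nat \<Rightarrow> nat \<Rightarrow> fa \<Rightarrow> fa" where
  "act_even a b x = comm (sig2 a b) x"

definition asym :: "nat list \<Rightarrow> fa" where
  "asym as = (\<Sum>s\<in>{s. s permutes {0..<length as}}.
                fscale (of_int (sign s)) (mon (map (\<lambda>i. Odd (as ! s i)) [0..<length as])))"

definition Omega :: "nat \<Rightarrow> fa set" where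
  "Omega n = fspan {asym as | as. length as \<le> 2*n \<and> set as \<subseteq> {1..2*n}}"

end

theory Submission
  imports Defs
begin

(* Everything is done modulo the ideal I of relations, which is stable under both actions.
   Let Omega_lt n q be the span of the brackets [a_1 ... a_p] with p < q, plus I.  An even
   generator acts as a derivation sending sigma_d to g_db sigma_c + g_dc sigma_b, so it
   preserves every Omega_lt n q.  For an odd generator one shows by strong induction on p that
     sigma_a |> [a_1 ... a_p] = 2/(p+1) [a a_1 ... a_p]  modulo Omega_lt n p.
   Expanding [c cs] along its first and along its last position gives
     2 [c cs] = sigma_c |> [cs] - sum_j sigma_(cs_j) |> [cs[j := c]];
   acting with sigma_a, anticommuting the two odd actions (their anticommutator is the
   action of sigma_ac, which preserves length) and using the induction hypothesis on the
   shorter brackets gives the step.  Since a bracket of 2n+1 indices from {1..2n} repeats an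
   index, it vanishes, and so sigma_a |> Omega lies in Omega + I. *)

section \<open>The free algebra\<close>

lemma fscale_add_right: "fscale c (x + y) = fscale c x + fscale c y"
  by (simp add: fscale_def fun_eq_iff algebra_simps)

lemma fscale_add_left: "fscale (c + d) x = fscale c x + fscale d x"
  by (simp add: fscale_def fun_eq_iff algebra_simps)

interpretation fa: vector_space fscale
  by unfold_locales (simp_all add: fscale_add_right fscale_add_left fscale_def fun_eq_iff algebra_simps)

lemma fspan_eq_span: "fspan S = fa.span S"
  unfolding fspan_def fa.span_explicit by auto

lemma (in module_hom) image_span_subset: "m2.subspace V \<Longrightarrow> f ` S \<subseteq> V \<Longrightarrow> f ` m1.span S \<subseteq> V"
  by (metis span_image m2.span_minimal)

abbreviation fa_linear :: "(fa \<Rightarrow> fa) \<Rightarrow> bool" where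
  "fa_linear \<equiv> module_hom fscale fscale"

lemma fa_linearI:
  "(\<And>x y. f (x + y) = f x + f y) \<Longrightarrow> (\<And>c x. f (fscale c x) = fscale c (f x)) \<Longrightarrow> fa_linear f"
  by (simp add: module_hom_iff fa.module_axioms)

lemma fa_linear_span_into:
  assumes "fa_linear f" "fa.subspace V" "\<And>x. x \<in> S \<Longrightarrow> f x \<in> V" "x \<in> fa.span S"
  shows "f x \<in> V"
  using module_hom.image_span_subset[OF assms(1,2), of S] assms(3,4) by blast

lemma fmul_add_left: "fmul (x + y) z = fmul x z + fmul y z"
  by (simp add: fmul_def fun_eq_iff algebra_simps sum.distrib)
lemma fmul_add_right: "fmul z (x + y) = fmul z x + fmul z y"
  by (simp add: fmul_def fun_eq_iff algebra_simps sum.distrib)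
lemma fmul_scale_left: "fmul (fscale c x) z = fscale c (fmul x z)"
  by (simp add: fmul_def fscale_def fun_eq_iff sum_distrib_left algebra_simps)
lemma fmul_scale_right: "fmul z (fscale c x) = fscale c (fmul z x)"
  by (simp add: fmul_def fscale_def fun_eq_iff sum_distrib_left algebra_simps)

lemma fa_linear_fmul_left: "fa_linear (\<lambda>x. fmul x z)"
  by (rule fa_linearI) (simp_all add: fmul_add_left fmul_scale_left)
lemma fa_linear_fmul_right: "fa_linear (fmul z)"
  by (rule fa_linearI) (simp_all add: fmul_add_right fmul_scale_right)

lemmas fmul_zero_left[simp] = module_hom.zero[OF fa_linear_fmul_left]
lemmas fmul_zero_right[simp] = module_hom.zero[OF fa_linear_fmul_right]
lemmas fmul_diff_left = module_hom.diff[OF fa_linear_fmul_left]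
lemmas fmul_diff_right = module_hom.diff[OF fa_linear_fmul_right]
lemmas fmul_sum_left = module_hom.sum[OF fa_linear_fmul_left]
lemmas fmul_sum_right = module_hom.sum[OF fa_linear_fmul_right]

lemmas fmul_linear = fmul_add_left fmul_add_right fmul_diff_left fmul_diff_right
  fmul_scale_left fmul_scale_right fmul_sum_left fmul_sum_right

lemma fmul_mon_mon: "fmul (mon u) (mon v) = mon (u @ v)"
proof
  fix w
  have "fmul (mon u) (mon v) w = (\<Sum>i\<le>length w. if i = length u \<and> w = u @ v then 1 else 0)"
    unfolding fmul_def mon_def by (rule sum.cong) (auto simp: min_def)
  also have "\<dots> = mon (u @ v) w"
    by (auto simp: mon_def)
  finally show "fmul (mon u) (mon v) w = mon (u @ v) w" .
qed

lemma fmul_assoc: "fmul (fmul x y) z = fmul x (fmul y z)"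
proof
  fix w :: "osp_gen list"
  let ?n = "length w"
  define F where "F j k = x (take j w) * y (take k (drop j w)) * z (drop (j + k) w)" for j k
  have "fmul (fmul x y) z w = (\<Sum>i\<le>?n. \<Sum>j\<le>i. F j (i - j))"
    unfolding fmul_def F_def
    by (auto simp: sum_distrib_right min_def take_drop intro!: sum.cong)
  also have "\<dots> = (\<Sum>(j,k)\<in>{(j,k). j + k < Suc ?n}. F j k)"
    by (subst sum.triangle_reindex) (simp add: lessThan_Suc_atMost)
  also have "{(j,k). j + k < Suc ?n} = Sigma {..?n} (\<lambda>j. {..?n - j})"
    by auto
  also have "(\<Sum>(j,k)\<in>Sigma {..?n} (\<lambda>j. {..?n - j}). F j k) = (\<Sum>j\<le>?n. \<Sum>k\<le>?n - j. F j k)"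
    by (rule sum.Sigma[symmetric]) auto
  also have "\<dots> = fmul x (fmul y z) w"
    unfolding fmul_def F_def
    by (auto simp: sum_distrib_left algebra_simps intro!: sum.cong)
  finally show "fmul (fmul x y) z w = fmul x (fmul y z) w" .
qed

lemma fmul_Nil_left[simp]: "fmul (mon []) x = x"
proof
  fix w show "fmul (mon []) x w = x w"
    unfolding fmul_def mon_def by (subst sum.remove[of _ 0]) (auto intro!: sum.neutral)
qed

lemma fmul_Nil_right[simp]: "fmul x (mon []) = x"
proof
  fix w show "fmul x (mon []) w = x w"
    unfolding fmul_def mon_def by (subst sum.remove[of _ "length w"]) (auto intro!: sum.neutral)
qed

(* fa also contains infinite formal sums of words; the free algebra proper is ncpoly, and the
   ideal is closed only under multiplication by its elements. *)
definition ncpoly :: "fa set" where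
  "ncpoly = fa.span (range mon)"

lemma mon_in_ncpoly[simp]: "mon u \<in> ncpoly"
  by (simp add: ncpoly_def fa.span_base)

section \<open>The ideal of relations\<close>

definition ideal_gens :: "nat \<Rightarrow> fa set" where
  "ideal_gens n = {fmul (mon u) (fmul r (mon v)) | u r v. r \<in> rels n}"

lemma Iideal_eq_span: "Iideal n = fa.span (ideal_gens n)"
  unfolding Iideal_def ideal_gens_def fspan_eq_span ..

lemma subspace_Iideal: "fa.subspace (Iideal n)"
  by (simp add: Iideal_eq_span)

lemma rels_in_Iideal: "r \<in> rels n \<Longrightarrow> r \<in> Iideal n"
  unfolding Iideal_eq_span ideal_gens_def
  by (rule fa.span_base) (force intro: exI[of _ "[]"])

lemma fmul_mon_Iideal:
  assumes "i \<in> Iideal n" shows "fmul (mon u) i \<in> Iideal n"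
proof -
  have "fmul (mon u) x \<in> Iideal n" if "x \<in> ideal_gens n" for x
  proof -
    from that obtain u' r v where x: "x = fmul (mon u') (fmul r (mon v))" and r: "r \<in> rels n"
      by (auto simp: ideal_gens_def)
    have "fmul (mon u) x = fmul (mon (u @ u')) (fmul r (mon v))"
      unfolding x by (simp only: fmul_assoc[symmetric] fmul_mon_mon)
    then have "fmul (mon u) x \<in> ideal_gens n"
      using r unfolding ideal_gens_def by blast
    then show ?thesis
      unfolding Iideal_eq_span by (rule fa.span_base)
  qed
  from this assms show ?thesis
    unfolding Iideal_eq_span by (rule fa_linear_span_into[OF fa_linear_fmul_right fa.subspace_span])
qed

lemma Iideal_fmul_mon:
  assumes "i \<in> Iideal n" shows "fmul i (mon u) \<in> Iideal n"
proof -
  have "fmul x (mon u) \<in> Iideal n" if "x \<in> ideal_gens n" for x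
  proof -
    from that obtain u' r v where x: "x = fmul (mon u') (fmul r (mon v))" and r: "r \<in> rels n"
      by (auto simp: ideal_gens_def)
    have "fmul x (mon u) = fmul (mon u') (fmul r (mon (v @ u)))"
      unfolding x by (simp only: fmul_assoc fmul_mon_mon)
    then have "fmul x (mon u) \<in> ideal_gens n"
      using r unfolding ideal_gens_def by blast
    then show ?thesis
      unfolding Iideal_eq_span by (rule fa.span_base)
  qed
  from this assms show ?thesis
    unfolding Iideal_eq_span by (rule fa_linear_span_into[OF fa_linear_fmul_left fa.subspace_span])
qed

lemma fmul_ncpoly_Iideal: "x \<in> ncpoly \<Longrightarrow> i \<in> Iideal n \<Longrightarrow> fmul x i \<in> Iideal n"
  unfolding ncpoly_def
  by (rule fa_linear_span_into[OF fa_linear_fmul_left subspace_Iideal]) (auto intro: fmul_mon_Iideal)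

lemma Iideal_fmul_ncpoly: "x \<in> ncpoly \<Longrightarrow> i \<in> Iideal n \<Longrightarrow> fmul i x \<in> Iideal n"
  unfolding ncpoly_def
  by (rule fa_linear_span_into[OF fa_linear_fmul_right subspace_Iideal]) (auto intro: Iideal_fmul_mon)

section \<open>The grading and the action\<close>

lemma odd_word_append: "odd_word (u @ v) \<longleftrightarrow> odd_word u \<noteq> odd_word v"
  by (simp add: odd_word_def)

lemma odd_word_map_Odd: "odd_word (map Odd xs) \<longleftrightarrow> odd (length xs)"
  by (simp add: odd_word_def filter_map o_def)

definition homogeneous :: "nat \<Rightarrow> fa set" where
  "homogeneous k = {x. \<forall>w. x w \<noteq> 0 \<longrightarrow> odd_word w = odd k}"

lemma subspace_homogeneous: "fa.subspace (homogeneous k)"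
  unfolding fa.subspace_def
proof (intro conjI ballI allI)
  show "0 \<in> homogeneous k"
    by (simp add: homogeneous_def)
  show "fscale c x \<in> homogeneous k" if "x \<in> homogeneous k" for c x
    using that by (simp add: homogeneous_def fscale_def)
  show "x + y \<in> homogeneous k" if "x \<in> homogeneous k" "y \<in> homogeneous k" for x y
    unfolding homogeneous_def
  proof (intro CollectI allI impI)
    fix w assume "(x + y) w \<noteq> 0"
    then have "x w \<noteq> 0 \<or> y w \<noteq> 0"
      by auto
    then show "odd_word w = odd k"
      using that unfolding homogeneous_def by blast
  qed
qed

lemma homogeneous_parity: "x \<in> homogeneous k \<Longrightarrow> even k = even l \<Longrightarrow> x \<in> homogeneous l"
  by (simp add: homogeneous_def)

lemma mon_homogeneous: "odd_word u = odd k \<Longrightarrow> mon u \<in> homogeneous k"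
  by (simp add: homogeneous_def mon_def)

lemma sig_homogeneous: "sig a \<in> homogeneous 1"
  by (simp add: sig_def mon_homogeneous odd_word_def)

lemma sig2_homogeneous: "sig2 a b \<in> homogeneous 0"
  by (simp add: sig2_def mon_homogeneous odd_word_def)

lemma fmul_homogeneous:
  assumes "x \<in> homogeneous k" "y \<in> homogeneous l"
  shows "fmul x y \<in> homogeneous (k + l)"
  unfolding homogeneous_def
proof (intro CollectI allI impI)
  fix w assume "fmul x y w \<noteq> 0"
  then obtain i where "x (take i w) * y (drop i w) \<noteq> 0"
    unfolding fmul_def by (meson sum.neutral)
  then have "x (take i w) \<noteq> 0" "y (drop i w) \<noteq> 0"
    by auto
  then have "odd_word (take i w) = odd k" "odd_word (drop i w) = odd l"
    using assms unfolding homogeneous_def by blast+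
  moreover have "odd_word w \<longleftrightarrow> odd_word (take i w) \<noteq> odd_word (drop i w)"
    using odd_word_append[of "take i w" "drop i w"] by (simp only: append_take_drop_id)
  ultimately show "odd_word w = odd (k + l)"
    by (simp only: even_add) blast
qed

lemma rels_homogeneous:
  assumes "r \<in> rels n" shows "\<exists>k. r \<in> homogeneous k"
proof -
  note sub = fa.subspace_add[OF subspace_homogeneous] fa.subspace_diff[OF subspace_homogeneous]
    fa.subspace_scale[OF subspace_homogeneous]
  have odd: "comm (sig a) (sig2 b c) \<in> homogeneous 1" for a b c
    using fmul_homogeneous[OF sig_homogeneous sig2_homogeneous, of a b c]
      fmul_homogeneous[OF sig2_homogeneous sig_homogeneous, of b c a]
    unfolding comm_def by (intro sub) simp_all
  have "fmul (sig a) (sig b) \<in> homogeneous 0" for a b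
    by (rule homogeneous_parity[OF fmul_homogeneous[OF sig_homogeneous sig_homogeneous]]) simp
  then have even: "acomm (sig a) (sig b) \<in> homogeneous 0" "comm (sig2 a b) (sig2 c d) \<in> homogeneous 0"
    for a b c d
    using fmul_homogeneous[OF sig2_homogeneous sig2_homogeneous]
    unfolding acomm_def comm_def by (auto intro!: sub)
  show ?thesis
    using assms unfolding rels_def
    by (elim UnE CollectE exE conjE) (blast intro: sub odd even sig_homogeneous sig2_homogeneous)+
qed

lemma ideal_gens_homogeneous:
  assumes "x \<in> ideal_gens n" shows "\<exists>k. x \<in> homogeneous k"
proof -
  from assms obtain u r v where x: "x = fmul (mon u) (fmul r (mon v))" and "r \<in> rels n"
    unfolding ideal_gens_def by blast
  then obtain k where r: "r \<in> homogeneous k"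
    using rels_homogeneous by blast
  have mon: "mon u \<in> homogeneous (of_bool (odd_word u))" for u
    by (rule mon_homogeneous) simp
  show ?thesis
    unfolding x using fmul_homogeneous[OF mon fmul_homogeneous[OF r mon]] ..
qed

lemma sig_in_ncpoly[simp]: "sig a \<in> ncpoly" and sig2_in_ncpoly[simp]: "sig2 a b \<in> ncpoly"
  by (simp_all add: sig_def sig2_def)

lemma act_odd_eq:
  assumes "x \<in> homogeneous k"
  shows "act_odd a x = fmul (sig a) x + fscale ((-1)^k) (fmul x (sig a))"
proof -
  have "x w = 0" if "odd_word w \<noteq> odd k" for w
    using assms that unfolding homogeneous_def by blast
  then have "even_part x = (if even k then x else 0)" "odd_part x = (if odd k then x else 0)"
    unfolding even_part_def odd_part_def fun_eq_iff by auto
  then show ?thesis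
    by (cases "even k") (simp_all add: act_odd_def acomm_def comm_def fa.scale_minus_left)
qed

lemma act_odd_homogeneous:
  assumes "x \<in> homogeneous k" shows "act_odd a x \<in> homogeneous (Suc k)"
proof -
  have "fmul (sig a) x \<in> homogeneous (Suc k)" "fmul x (sig a) \<in> homogeneous (Suc k)"
    using fmul_homogeneous[OF sig_homogeneous assms] fmul_homogeneous[OF assms sig_homogeneous]
    by simp_all
  then show ?thesis
    unfolding act_odd_eq[OF assms]
    by (simp add: fa.subspace_add[OF subspace_homogeneous] fa.subspace_scale[OF subspace_homogeneous])
qed

lemma fa_linear_act_odd: "fa_linear (act_odd a)"
proof (rule fa_linearI)
  have parts: "even_part (x + y) = even_part x + even_part y" "odd_part (x + y) = odd_part x + odd_part y"
    "even_part (fscale c x) = fscale c (even_part x)" "odd_part (fscale c x) = fscale c (odd_part x)"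
    for c x y
    by (auto simp: even_part_def odd_part_def fun_eq_iff fscale_def)
  show "act_odd a (x + y) = act_odd a x + act_odd a y" for x y
    by (simp add: act_odd_def parts acomm_def comm_def fmul_linear algebra_simps)
  show "act_odd a (fscale c x) = fscale c (act_odd a x)" for c x
    by (simp add: act_odd_def parts acomm_def comm_def fmul_linear fa.scale_right_distrib
        fa.scale_right_diff_distrib)
qed

lemma fa_linear_act_even: "fa_linear (act_even a b)"
  by (rule fa_linearI)
    (simp_all add: act_even_def comm_def fmul_linear algebra_simps fa.scale_right_diff_distrib)

lemma act_odd_Iideal:
  assumes "i \<in> Iideal n" shows "act_odd a i \<in> Iideal n"
proof -
  have "act_odd a x \<in> Iideal n" if x: "x \<in> ideal_gens n" for x
  proof -
    obtain k where "x \<in> homogeneous k"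
      using ideal_gens_homogeneous[OF x] by blast
    moreover have "x \<in> Iideal n"
      using x by (simp add: Iideal_eq_span fa.span_base)
    ultimately show ?thesis
      using subspace_Iideal
      by (simp add: act_odd_eq fa.subspace_add fa.subspace_scale fmul_ncpoly_Iideal
          Iideal_fmul_ncpoly)
  qed
  from this assms show ?thesis
    unfolding Iideal_eq_span by (rule fa_linear_span_into[OF fa_linear_act_odd fa.subspace_span])
qed

lemma act_even_Iideal: "i \<in> Iideal n \<Longrightarrow> act_even a b i \<in> Iideal n"
  unfolding act_even_def comm_def
  by (simp add: fa.subspace_diff[OF subspace_Iideal] fmul_ncpoly_Iideal Iideal_fmul_ncpoly)

lemma act_odd_anticomm:
  assumes x: "x \<in> homogeneous k" "x \<in> ncpoly" and ab: "a \<in> {1..2*n}" "b \<in> {1..2*n}"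
  shows "act_odd a (act_odd b x) + act_odd b (act_odd a x) - act_even a b x \<in> Iideal n"
proof -
  define r where "r = acomm (sig a) (sig b) - sig2 a b"
  have "r \<in> {acomm (sig a) (sig b) - sig2 a b | a b. a \<in> {1..2*n} \<and> b \<in> {1..2*n}}"
    unfolding r_def using ab by blast
  then have "r \<in> rels n"
    unfolding rels_def by (rule UnI1[OF UnI1[OF UnI2]])
  then have "r \<in> Iideal n"
    by (rule rels_in_Iideal)
  moreover
  have ss: "(-1::complex)^k * (-1)^k = 1"
    by (simp flip: power_mult_distrib)
  have "act_odd a (act_odd b x) + act_odd b (act_odd a x) - act_even a b x = fmul r x - fmul x r"
    unfolding act_odd_eq[OF act_odd_homogeneous[OF x(1)]]
    unfolding act_odd_eq[OF x(1)] act_even_def comm_def r_def acomm_def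
    by (simp add: fmul_linear fmul_assoc fa.scale_right_distrib ss algebra_simps)
  ultimately show ?thesis
    using x(2) subspace_Iideal by (simp add: fa.subspace_diff fmul_ncpoly_Iideal Iideal_fmul_ncpoly)
qed

section \<open>Brackets\<close>

definition asym_word :: "nat list \<Rightarrow> (nat \<Rightarrow> nat) \<Rightarrow> fa" where
  "asym_word as s = mon (map Odd (permute_list s as))"

lemma asym_word_eq: "asym_word as s = mon (map (\<lambda>i. Odd (as ! s i)) [0..<length as])"
  by (simp add: asym_word_def permute_list_def o_def)

lemma asym_eq_sum:
  "asym as = (\<Sum>s\<in>{s. s permutes {0..<length as}}. fscale (of_int (sign s)) (asym_word as s))"
  by (simp add: asym_def asym_word_eq)

lemma asym_Nil[simp]: "asym [] = mon []"
  by (simp add: asym_def)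

lemma asym_homogeneous: "asym as \<in> homogeneous (length as)"
proof -
  have "asym_word as s \<in> homogeneous (length as)" for s
    unfolding asym_word_def by (rule mon_homogeneous) (simp add: odd_word_map_Odd)
  then show ?thesis
    unfolding asym_eq_sum
    by (intro fa.subspace_sum[OF subspace_homogeneous] fa.subspace_scale[OF subspace_homogeneous])
qed

lemma asym_in_ncpoly[simp]: "asym as \<in> ncpoly"
  unfolding asym_eq_sum asym_word_def ncpoly_def
  by (intro fa.span_sum fa.span_scale fa.span_base) simp

lemma sign_transpose_comp:
  assumes "finite A" "s permutes A"
  shows "sign (transpose i j \<circ> s) = (if i = j then 1 else -1) * sign s"
  using permutes_imp_permutation[OF assms] by (simp add: sign_compose[OF permutation_swap_id] sign_swap_id)

lemma signed_sum_permutes_insert: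
  assumes "finite A" "a \<notin> A"
  shows "(\<Sum>s\<in>{s. s permutes insert a A}. fscale (of_int (sign s)) (F s))
       = (\<Sum>j\<in>insert a A. fscale (if j = a then 1 else -1)
            (\<Sum>q\<in>{q. q permutes A}. fscale (of_int (sign q)) (F (transpose a j \<circ> q))))"
  unfolding sum_over_permutations_insert[OF assms]
  by (intro sum.cong refl) (simp add: sign_transpose_comp[OF assms(1)] fa.scale_sum_right)

lemma asym_swap:
  assumes "i < length as" "j < length as" "i \<noteq> j"
  shows "asym (as[i := as ! j, j := as ! i]) = - asym as"
proof -
  let ?P = "{s. s permutes {0..<length as}}"
  let ?t = "transpose i j"
  have t: "?t permutes {0..<length as}"
    using assms by (intro permutes_swap_id) auto
  have word: "asym_word (as[i := as ! j, j := as ! i]) s = asym_word as (?t \<circ> s)"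
    if "s permutes {0..<length as}" for s
  proof -
    have "s k < length as" if "k < length as" for k
      using permutes_in_image[OF \<open>s permutes _\<close>, of k] that by auto
    then show ?thesis
      unfolding asym_word_eq using assms
      by (auto simp: nth_list_update transpose_def intro!: arg_cong[where f=mon])
  qed
  have "asym (as[i := as ! j, j := as ! i]) = (\<Sum>s\<in>?P. fscale (of_int (sign s)) (asym_word as (?t \<circ> s)))"
    unfolding asym_eq_sum by (intro sum.cong) (auto simp: word)
  also have "\<dots> = (\<Sum>s\<in>?P. fscale (of_int (sign (?t \<circ> s))) (asym_word as (?t \<circ> (?t \<circ> s))))"
    by (rule setum_permutations_compose_left[OF t])
  also have "\<dots> = (\<Sum>s\<in>?P. - fscale (of_int (sign s)) (asym_word as s))"
    using assms by (intro sum.cong refl) (simp add: sign_transpose_comp[OF finite_atLeastLessThan] comp_assoc[symmetric] fa.scale_minus_left)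
  also have "\<dots> = - asym as"
    unfolding asym_eq_sum by (simp add: sum_negf)
  finally show ?thesis .
qed

lemma asym_eq_0_if_not_distinct:
  assumes "\<not> distinct as" shows "asym as = 0"
proof -
  obtain i j where ij: "i < length as" "j < length as" "i \<noteq> j" "as ! i = as ! j"
    using assms by (auto simp: distinct_conv_nth)
  then have "as[i := as ! j, j := as ! i] = as"
    by (metis list_update_id)
  then have "asym as w = - asym as w" for w
    using fun_cong[OF asym_swap[OF ij(1-3)], of w] by simp
  then show ?thesis
    by (simp add: fun_eq_iff)
qed

lemma permutes_atLeastLessThan_less: "q permutes {0..<m} \<Longrightarrow> i < m \<Longrightarrow> q i < (m::nat)"
  using permutes_in_image[of q "{0..<m}" i] by auto

lemma asym_word_snoc:
  assumes q: "q permutes {0..<m}" and len: "length cs = m" and j: "j \<le> m"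
  shows "asym_word (cs @ [t]) (transpose m j \<circ> q)
       = fmul (asym_word (if j = m then cs else cs[j := t]) q) (sig ((cs @ [t]) ! j))"
proof -
  define cs' where "cs' = (if j = m then cs else cs[j := t])"
  have word: "map (\<lambda>i. Odd ((cs @ [t]) ! (transpose m j \<circ> q) i)) [0..<m] = map (\<lambda>i. Odd (cs' ! q i)) [0..<m]"
  proof (rule map_cong[OF refl])
    fix i assume "i \<in> set [0..<m]"
    then have "q i < m"
      using permutes_atLeastLessThan_less[OF q] by simp
    then show "Odd ((cs @ [t]) ! (transpose m j \<circ> q) i) = Odd (cs' ! q i)"
      using len j by (auto simp: cs'_def transpose_def nth_append nth_list_update)
  qed
  have last: "(transpose m j \<circ> q) m = j"
    using permutes_not_in[OF q, of m] by simp
  have "asym_word (cs @ [t]) (transpose m j \<circ> q)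
      = mon (map (\<lambda>i. Odd ((cs @ [t]) ! (transpose m j \<circ> q) i)) [0..<m]
          @ [Odd ((cs @ [t]) ! (transpose m j \<circ> q) m)])"
    unfolding asym_word_eq by (simp add: len del: o_apply)
  also have "\<dots> = fmul (asym_word cs' q) (sig ((cs @ [t]) ! j))"
    using len unfolding word last asym_word_eq sig_def fmul_mon_mon by (simp add: cs'_def)
  finally show ?thesis
    unfolding cs'_def .
qed

lemma asym_snoc:
  "asym (cs @ [t]) = fmul (asym cs) (sig t) - (\<Sum>j<length cs. fmul (asym (cs[j := t])) (sig (cs ! j)))"
proof -
  define m where "m = length cs"
  have "{0..<length (cs @ [t])} = insert m {0..<m}"
    by (auto simp: m_def)
  then have "asym (cs @ [t]) = (\<Sum>j\<in>insert m {0..<m}. fscale (if j = m then 1 else -1)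
      (\<Sum>q\<in>{q. q permutes {0..<m}}. fscale (of_int (sign q)) (asym_word (cs @ [t]) (transpose m j \<circ> q))))"
    unfolding asym_eq_sum by (simp add: signed_sum_permutes_insert)
  also have "\<dots> = (\<Sum>j\<in>insert m {0..<m}. fscale (if j = m then 1 else -1)
      (fmul (asym (if j = m then cs else cs[j := t])) (sig ((cs @ [t]) ! j))))"
  proof (intro sum.cong refl arg_cong[where f="fscale _"])
    fix j assume j: "j \<in> insert m {0..<m}"
    have "asym_word (cs @ [t]) (transpose m j \<circ> q)
        = fmul (asym_word (if j = m then cs else cs[j := t]) q) (sig ((cs @ [t]) ! j))"
      if "q permutes {0..<m}" for q
      using j by (intro asym_word_snoc[OF that m_def[symmetric]]) auto
    then show "(\<Sum>q\<in>{q. q permutes {0..<m}}. fscale (of_int (sign q)) (asym_word (cs @ [t]) (transpose m j \<circ> q)))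
        = fmul (asym (if j = m then cs else cs[j := t])) (sig ((cs @ [t]) ! j))"
      by (simp add: asym_eq_sum fmul_sum_left fmul_scale_left m_def)
  qed
  also have "\<dots> = fmul (asym cs) (sig t) - (\<Sum>j<m. fmul (asym (cs[j := t])) (sig (cs ! j)))"
    by (simp add: m_def nth_append fa.scale_minus_left sum_negf atLeast0LessThan)
  finally show ?thesis
    by (simp add: m_def)
qed

lemma sum_permutes_shift:
  "(\<Sum>q\<in>{q. q permutes {1..<Suc m}}. H q) = (\<Sum>q\<in>{q. q permutes {0..<m}}. H (map_permutation {0..<m} Suc q))"
proof -
  have Suc: "bij_betw Suc {0..<m} {1..<Suc m}"
    by (rule bij_betwI[where g="\<lambda>i. i - 1"]) auto
  have pred: "bij_betw (\<lambda>i. i - 1) {1..<Suc m} {0..<m}"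
    by (rule bij_betwI[where g=Suc]) auto
  show ?thesis
  proof (rule sum.reindex_bij_witness[where i="map_permutation {0..<m} Suc"
        and j="map_permutation {1..<Suc m} (\<lambda>i. i - 1)"], unfold mem_Collect_eq)
    fix q assume q: "q permutes {1..<Suc m}"
    show "map_permutation {0..<m} Suc (map_permutation {1..<Suc m} (\<lambda>i. i - 1) q) = q"
      by (rule map_permutation_compose_inv[OF pred q]) auto
    then show "H (map_permutation {0..<m} Suc (map_permutation {1..<Suc m} (\<lambda>i. i - 1) q)) = H q"
      by simp
    show "map_permutation {1..<Suc m} (\<lambda>i. i - 1) q permutes {0..<m}"
      by (rule map_permutation_permutes[OF pred q])
  next
    fix q assume q: "q permutes {0..<m}"
    show "map_permutation {1..<Suc m} (\<lambda>i. i - 1) (map_permutation {0..<m} Suc q) = q"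
      by (rule map_permutation_compose_inv[OF Suc q]) auto
    show "map_permutation {0..<m} Suc q permutes {1..<Suc m}"
      by (rule map_permutation_permutes[OF Suc q])
  qed
qed

lemma asym_word_Cons:
  assumes q: "q permutes {0..<m}" and len: "length cs = m" and j: "j \<le> m"
  shows "asym_word (c # cs) (transpose 0 j \<circ> map_permutation {0..<m} Suc q)
       = fmul (sig ((c # cs) ! j)) (asym_word (if j = 0 then cs else cs[j - 1 := c]) q)"
proof -
  define cs' where "cs' = (if j = 0 then cs else cs[j - 1 := c])"
  define Q where "Q = map_permutation {0..<m} Suc q"
  have "Q permutes {1..<Suc m}"
    unfolding Q_def by (rule map_permutation_permutes[OF _ q], rule bij_betwI[where g="\<lambda>i. i - 1"]) auto
  then have first: "(transpose 0 j \<circ> Q) 0 = j"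
    using permutes_not_in[of Q "{1..<Suc m}" 0] by simp
  have QSuc: "Q (Suc i) = Suc (q i)" if "i < m" for i
    unfolding Q_def by (rule map_permutation_apply) (use that in auto)
  have word: "map (\<lambda>i. Odd ((c # cs) ! (transpose 0 j \<circ> Q) (Suc i))) [0..<m] = map (\<lambda>i. Odd (cs' ! q i)) [0..<m]"
  proof (rule map_cong[OF refl])
    fix i assume "i \<in> set [0..<m]"
    then have i: "i < m" "q i < m"
      using permutes_atLeastLessThan_less[OF q] by auto
    have "(c # cs) ! (transpose 0 j (Suc (q i))) = cs' ! q i"
      using i len j by (cases j) (auto simp: cs'_def transpose_def nth_list_update)
    then show "Odd ((c # cs) ! (transpose 0 j \<circ> Q) (Suc i)) = Odd (cs' ! q i)"
      using QSuc[OF i(1)] by simp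
  qed
  have "[0..<Suc m] = 0 # map Suc [0..<m]"
    by (simp add: map_Suc_upt upt_conv_Cons)
  then have "asym_word (c # cs) (transpose 0 j \<circ> Q) = mon (Odd ((c # cs) ! (transpose 0 j \<circ> Q) 0) #
      map (\<lambda>i. Odd ((c # cs) ! (transpose 0 j \<circ> Q) (Suc i))) [0..<m])"
    unfolding asym_word_eq by (simp only: len length_Cons list.map map_map o_def)
  also have "\<dots> = fmul (sig ((c # cs) ! j)) (asym_word cs' q)"
    using len unfolding word first asym_word_eq sig_def fmul_mon_mon by (simp add: cs'_def)
  finally show ?thesis
    unfolding cs'_def Q_def .
qed

lemma asym_Cons:
  "asym (c # cs) = fmul (sig c) (asym cs) - (\<Sum>j<length cs. fmul (sig (cs ! j)) (asym (cs[j := c])))"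
proof -
  define m where "m = length cs"
  let ?shift = "map_permutation {0..<m} Suc"
  have "{0..<length (c # cs)} = insert 0 {1..<Suc m}"
    by (auto simp: m_def)
  then have "asym (c # cs) = (\<Sum>j\<in>insert 0 {1..<Suc m}. fscale (if j = 0 then 1 else -1)
      (\<Sum>q\<in>{q. q permutes {1..<Suc m}}. fscale (of_int (sign q)) (asym_word (c # cs) (transpose 0 j \<circ> q))))"
    unfolding asym_eq_sum by (simp only:) (rule signed_sum_permutes_insert; simp)
  also have "\<dots> = (\<Sum>j\<in>insert 0 {1..<Suc m}. fscale (if j = 0 then 1 else -1)
      (\<Sum>q\<in>{q. q permutes {0..<m}}. fscale (of_int (sign (?shift q))) (asym_word (c # cs) (transpose 0 j \<circ> ?shift q))))"
    by (simp only: sum_permutes_shift)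
  also have "\<dots> = (\<Sum>j\<in>insert 0 {1..<Suc m}. fscale (if j = 0 then 1 else -1)
      (fmul (sig ((c # cs) ! j)) (asym (if j = 0 then cs else cs[j - 1 := c]))))"
  proof (intro sum.cong refl arg_cong[where f="fscale _"])
    fix j assume j: "j \<in> insert 0 {1..<Suc m}"
    have "fscale (of_int (sign (?shift q))) (asym_word (c # cs) (transpose 0 j \<circ> ?shift q))
        = fscale (of_int (sign q)) (fmul (sig ((c # cs) ! j)) (asym_word (if j = 0 then cs else cs[j - 1 := c]) q))"
      if q: "q permutes {0..<m}" for q
    proof -
      have "sign (?shift q) = sign q"
        by (rule sign_map_permutation[OF _ q]) auto
      moreover have "j \<le> m"
        using j by auto
      ultimately show ?thesis
        using asym_word_Cons[OF q m_def[symmetric], of j c] by simp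
    qed
    then show "(\<Sum>q\<in>{q. q permutes {0..<m}}. fscale (of_int (sign (?shift q))) (asym_word (c # cs) (transpose 0 j \<circ> ?shift q)))
        = fmul (sig ((c # cs) ! j)) (asym (if j = 0 then cs else cs[j - 1 := c]))"
      by (simp add: asym_eq_sum fmul_sum_right fmul_scale_right m_def)
  qed
  also have "\<dots> = fmul (sig c) (asym cs) - (\<Sum>j\<in>{1..<Suc m}. fmul (sig (cs ! (j - 1))) (asym (cs[j - 1 := c])))"
    by (simp add: fa.scale_minus_left sum_negf)
  also have "(\<Sum>j\<in>{1..<Suc m}. fmul (sig (cs ! (j - 1))) (asym (cs[j - 1 := c])))
      = (\<Sum>j<m. fmul (sig (cs ! j)) (asym (cs[j := c])))"
    using sum.shift_bounds_Suc_ivl[of "\<lambda>j. fmul (sig (cs ! (j - 1))) (asym (cs[j - 1 := c]))" 0 m]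
    by (simp add: atLeast0LessThan)
  finally show ?thesis
    unfolding m_def .
qed

lemma asym_swap_adjacent: "asym (pre @ y # x # ys) = - asym (pre @ x # y # ys)"
proof -
  let ?as = "pre @ x # y # ys"
  have "?as[length pre := ?as ! Suc (length pre), Suc (length pre) := ?as ! length pre] = pre @ y # x # ys"
    by (simp add: list_update_append nth_append)
  then show ?thesis
    using asym_swap[of "length pre" ?as "Suc (length pre)"] by simp
qed

lemma asym_move_to_front: "asym (xs @ c # ys) = fscale ((-1) ^ length xs) (asym (c # xs @ ys))"
proof (induction xs arbitrary: ys rule: rev_induct)
  case Nil
  then show ?case by simp
next
  case (snoc x xs)
  have "asym ((xs @ [x]) @ c # ys) = - asym (xs @ c # x # ys)"
    using asym_swap_adjacent[of xs c x ys] by simp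
  also have "\<dots> = - fscale ((-1) ^ length xs) (asym (c # xs @ x # ys))"
    by (simp only: snoc.IH)
  finally show ?case
    by simp
qed

lemma asym_Cons_swap:
  assumes "j < length cs"
  shows "asym (c # cs[j := a]) = - asym (a # cs[j := c])"
proof -
  let ?as = "a # cs[j := c]"
  have "?as[0 := ?as ! Suc j, Suc j := ?as ! 0] = c # cs[j := a]"
    using assms by simp
  then show ?thesis
    using asym_swap[of 0 ?as "Suc j"] assms by simp
qed

lemma two_asym_Cons_eq_act_odd:
  "fscale 2 (asym (c # cs)) = act_odd c (asym cs) - (\<Sum>j<length cs. act_odd (cs ! j) (asym (cs[j := c])))"
proof -
  let ?s = "(-1::complex) ^ length cs"
  have ss: "?s * ?s = 1"
    by (simp flip: power_mult_distrib)
  have "act_odd c (asym cs) - (\<Sum>j<length cs. act_odd (cs ! j) (asym (cs[j := c])))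
     = (fmul (sig c) (asym cs) - (\<Sum>j<length cs. fmul (sig (cs ! j)) (asym (cs[j := c]))))
     + fscale ?s (fmul (asym cs) (sig c) - (\<Sum>j<length cs. fmul (asym (cs[j := c])) (sig (cs ! j))))"
    by (simp add: act_odd_eq[OF asym_homogeneous] sum.distrib fa.scale_right_diff_distrib
        fa.scale_sum_right algebra_simps)
  also have "\<dots> = asym (c # cs) + fscale ?s (asym (cs @ [c]))"
    by (simp only: asym_Cons asym_snoc)
  also have "\<dots> = fscale 2 (asym (c # cs))"
    using asym_move_to_front[of cs c "[]"] fa.scale_left_distrib[of 1 1 "asym (c # cs)"] by (simp add: ss)
  finally show ?thesis ..
qed

lemma act_odd_asym_Cons_Cons:
  "act_odd c (asym (a # cs)) - (\<Sum>j<length cs. act_odd (cs ! j) (asym (a # cs[j := c])))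
   = act_odd a (asym (c # cs)) - fscale 2 (asym (a # c # cs))"
proof -
  have "(\<Sum>j<length cs. act_odd (cs ! j) (asym (c # cs[j := a])))
      = - (\<Sum>j<length cs. act_odd (cs ! j) (asym (a # cs[j := c])))"
    by (simp add: asym_Cons_swap[where c = c and a = a] module_hom.neg[OF fa_linear_act_odd] sum_negf)
  then have split: "(\<Sum>j<length (c # cs). act_odd ((c # cs) ! j) (asym ((c # cs)[j := a])))
      = act_odd c (asym (a # cs)) - (\<Sum>j<length cs. act_odd (cs ! j) (asym (a # cs[j := c])))"
    by (simp only: length_Cons sum.lessThan_Suc_shift nth_Cons_0 nth_Cons_Suc list_update_code(2,3)
        diff_conv_add_uminus)
  show ?thesis
    unfolding two_asym_Cons_eq_act_odd[of a "c # cs"] split by (simp add: algebra_simps)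
qed

section \<open>The even action on brackets\<close>

definition subst_sum :: "nat \<Rightarrow> nat \<Rightarrow> nat \<Rightarrow> (nat list \<Rightarrow> fa) \<Rightarrow> nat list \<Rightarrow> fa" where
  "subst_sum n b c F as = (\<Sum>i<length as. fscale (g n (as ! i) b) (F (as[i := c]))
                                        + fscale (g n (as ! i) c) (F (as[i := b])))"

lemma act_even_sig:
  assumes "d \<in> {1..2*n}" "b \<in> {1..2*n}" "c \<in> {1..2*n}"
  shows "act_even b c (sig d) - (fscale (g n d b) (sig c) + fscale (g n d c) (sig b)) \<in> Iideal n"
proof -
  let ?r = "comm (sig d) (sig2 b c) + fscale (g n d b) (sig c) + fscale (g n d c) (sig b)"
  have "?r \<in> {comm (sig a) (sig2 b c) + fscale (g n a b) (sig c) + fscale (g n a c) (sig b)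
       | a b c. a \<in> {1..2*n} \<and> b \<in> {1..2*n} \<and> c \<in> {1..2*n}}"
    using assms by blast
  then have "?r \<in> rels n"
    unfolding rels_def by (rule UnI1[OF UnI2])
  then have "?r \<in> Iideal n"
    by (rule rels_in_Iideal)
  moreover have "act_even b c (sig d) - (fscale (g n d b) (sig c) + fscale (g n d c) (sig b)) = - ?r"
    by (simp add: act_even_def comm_def algebra_simps)
  ultimately show ?thesis
    by (simp only: fa.subspace_neg[OF subspace_Iideal])
qed

lemma act_even_fmul: "act_even b c (fmul x y) = fmul (act_even b c x) y + fmul x (act_even b c y)"
  by (simp add: act_even_def comm_def fmul_linear fmul_assoc algebra_simps)

lemma act_even_mon_Odd:
  assumes "set ds \<subseteq> {1..2*n}" "b \<in> {1..2*n}" "c \<in> {1..2*n}"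
  shows "act_even b c (mon (map Odd ds)) - subst_sum n b c (\<lambda>ds. mon (map Odd ds)) ds \<in> Iideal n"
  using assms(1)
proof (induction ds)
  case Nil
  have "act_even b c (mon (map Odd [])) - subst_sum n b c (\<lambda>ds. mon (map Odd ds)) [] = 0"
    by (simp add: subst_sum_def act_even_def comm_def)
  then show ?case
    by (simp only: fa.subspace_0[OF subspace_Iideal])
next
  case (Cons d ds)
  let ?M = "mon (map Odd ds)"
  let ?R = "fscale (g n d b) (sig c) + fscale (g n d c) (sig b)"
  have d: "d \<in> {1..2*n}" and ds: "set ds \<subseteq> {1..2*n}"
    using Cons.prems by auto
  have mon: "mon (map Odd (d # ds)) = fmul (sig d) ?M"
    by (simp add: sig_def fmul_mon_mon)
  have "subst_sum n b c (\<lambda>ds. mon (map Odd ds)) (d # ds)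
      = fmul ?R ?M + fmul (sig d) (subst_sum n b c (\<lambda>ds. mon (map Odd ds)) ds)"
    unfolding subst_sum_def length_Cons sum.lessThan_Suc_shift
    by (simp add: fmul_linear sig_def fmul_mon_mon fa.scale_right_distrib sum.distrib del: sum.lessThan_Suc)
  then have "act_even b c (mon (map Odd (d # ds))) - subst_sum n b c (\<lambda>ds. mon (map Odd ds)) (d # ds)
      = fmul (act_even b c (sig d) - ?R) ?M
        + fmul (sig d) (act_even b c ?M - subst_sum n b c (\<lambda>ds. mon (map Odd ds)) ds)"
    unfolding mon act_even_fmul by (simp add: fmul_diff_left fmul_diff_right)
  also have "\<dots> \<in> Iideal n"
    using Iideal_fmul_ncpoly[OF mon_in_ncpoly act_even_sig[OF d assms(2,3)]]
      fmul_ncpoly_Iideal[OF sig_in_ncpoly Cons.IH[OF ds]]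
    by (rule fa.subspace_add[OF subspace_Iideal])
  finally show ?case .
qed

lemma permute_list_update:
  assumes s: "s permutes {0..<length as}" and i: "i < length as"
  shows "(permute_list s as)[i := x] = permute_list s (as[s i := x])"
proof (rule nth_equalityI)
  fix k assume "k < length ((permute_list s as)[i := x])"
  then have k: "k < length as"
    by simp
  have "s i = s k \<longleftrightarrow> i = k"
    using permutes_inj[OF s] by (auto dest: injD)
  moreover have "s k < length as"
    using permutes_atLeastLessThan_less[OF s k] .
  ultimately show "(permute_list s as)[i := x] ! k = permute_list s (as[s i := x]) ! k"
    using k i by (simp add: permute_list_def nth_list_update)
qed simp

lemma subst_sum_permute_list:
  assumes s: "s permutes {0..<length as}"
  shows "subst_sum n b c F (permute_list s as) = subst_sum n b c (F \<circ> permute_list s) as"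
proof -
  let ?G = "\<lambda>m. fscale (g n (as ! m) b) (F (permute_list s (as[m := c])))
               + fscale (g n (as ! m) c) (F (permute_list s (as[m := b])))"
  have "permute_list s as ! i = as ! s i" if "i < length as" for i
    using that by (simp add: permute_list_def)
  then have "subst_sum n b c F (permute_list s as) = (\<Sum>i<length as. ?G (s i))"
    unfolding subst_sum_def by (intro sum.cong) (simp_all add: permute_list_update[OF s])
  also have "\<dots> = (\<Sum>m<length as. ?G m)"
    using sum.permute[OF s, of ?G] by (simp add: atLeast0LessThan comp_def)
  finally show ?thesis
    by (simp add: subst_sum_def)
qed

lemma act_even_asym:
  assumes "set as \<subseteq> {1..2*n}" "b \<in> {1..2*n}" "c \<in> {1..2*n}"
  shows "act_even b c (asym as) - subst_sum n b c asym as \<in> Iideal n"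
proof -
  let ?P = "{s. s permutes {0..<length as}}"
  let ?w = "\<lambda>ds. mon (map Odd ds)"
  have "act_even b c (asym as) = (\<Sum>s\<in>?P. fscale (of_int (sign s)) (act_even b c (?w (permute_list s as))))"
    unfolding asym_eq_sum asym_word_def
    by (simp add: module_hom.sum[OF fa_linear_act_even] module_hom.scale[OF fa_linear_act_even])
  moreover have "subst_sum n b c asym as = (\<Sum>s\<in>?P. fscale (of_int (sign s)) (subst_sum n b c ?w (permute_list s as)))"
  proof -
    have "(\<Sum>s\<in>?P. fscale (of_int (sign s)) (subst_sum n b c (?w \<circ> permute_list s) as))
        = subst_sum n b c (\<lambda>xs. \<Sum>s\<in>?P. fscale (of_int (sign s)) (?w (permute_list s xs))) as"
      unfolding subst_sum_def
      by (simp add: sum.swap[where A = ?P] sum.distrib fa.scale_sum_right fa.scale_right_distrib mult.commute)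
    also have "\<dots> = subst_sum n b c asym as"
      unfolding subst_sum_def asym_eq_sum asym_word_def by simp
    finally show ?thesis
      by (simp add: subst_sum_permute_list)
  qed
  moreover have "act_even b c (?w (permute_list s as)) - subst_sum n b c ?w (permute_list s as) \<in> Iideal n"
    if "s \<in> ?P" for s
  proof -
    have "set (permute_list s as) = set as"
      using that by (simp add: atLeast0LessThan)
    with assms show ?thesis
      by (intro act_even_mon_Odd) auto
  qed
  then have "(\<Sum>s\<in>?P. fscale (of_int (sign s))
      (act_even b c (?w (permute_list s as)) - subst_sum n b c ?w (permute_list s as))) \<in> Iideal n"
    by (intro fa.subspace_sum[OF subspace_Iideal] fa.subspace_scale[OF subspace_Iideal])
  ultimately show ?thesis
    by (simp add: fa.scale_right_diff_distrib sum_subtractf)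
qed

section \<open>The filtration by length\<close>

definition brackets :: "nat \<Rightarrow> nat \<Rightarrow> fa set" where
  "brackets n q = {asym as | as. length as < q \<and> set as \<subseteq> {1..2*n}}"

definition Omega_lt :: "nat \<Rightarrow> nat \<Rightarrow> fa set" where
  "Omega_lt n q = fa.span (brackets n q \<union> ideal_gens n)"

lemma subspace_Omega_lt: "fa.subspace (Omega_lt n q)"
  by (simp add: Omega_lt_def)

lemma Iideal_subset_Omega_lt: "Iideal n \<subseteq> Omega_lt n q"
  unfolding Omega_lt_def Iideal_eq_span by (rule fa.span_mono) simp

lemma asym_in_Omega_lt: "length as < q \<Longrightarrow> set as \<subseteq> {1..2*n} \<Longrightarrow> asym as \<in> Omega_lt n q"
  unfolding Omega_lt_def brackets_def by (rule fa.span_base) auto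

lemma Omega_lt_mono: "q \<le> q' \<Longrightarrow> Omega_lt n q \<subseteq> Omega_lt n q'"
  unfolding Omega_lt_def brackets_def by (rule fa.span_mono) auto

lemma Omega_lt_linear_image:
  assumes "x \<in> Omega_lt n q" "fa_linear f" "fa.subspace V"
    and "\<And>as. length as < q \<Longrightarrow> set as \<subseteq> {1..2*n} \<Longrightarrow> f (asym as) \<in> V"
    and "\<And>i. i \<in> Iideal n \<Longrightarrow> f i \<in> V"
  shows "f x \<in> V"
proof (rule fa_linear_span_into[OF assms(2,3)])
  show "x \<in> fa.span (brackets n q \<union> ideal_gens n)"
    using assms(1) by (simp add: Omega_lt_def)
  show "f y \<in> V" if "y \<in> brackets n q \<union> ideal_gens n" for y
    using that
  proof
    assume "y \<in> brackets n q"
    then show ?thesis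
      using assms(4) by (auto simp: brackets_def)
  next
    assume "y \<in> ideal_gens n"
    then show ?thesis
      using assms(5) by (simp add: Iideal_eq_span fa.span_base)
  qed
qed

lemma act_even_Omega_lt:
  assumes "x \<in> Omega_lt n q" "b \<in> {1..2*n}" "c \<in> {1..2*n}"
  shows "act_even b c x \<in> Omega_lt n q"
  using assms(1) fa_linear_act_even subspace_Omega_lt
proof (rule Omega_lt_linear_image)
  fix as assume as: "length as < q" "set as \<subseteq> {1..2*n}"
  have "asym (as[i := d]) \<in> Omega_lt n q" if "d \<in> {1..2*n}" for i d
    using as that set_update_subset_insert[of as i d] by (intro asym_in_Omega_lt) auto
  then have "subst_sum n b c asym as \<in> Omega_lt n q"
    unfolding subst_sum_def using assms(2,3)
    by (intro fa.subspace_sum[OF subspace_Omega_lt] fa.subspace_add[OF subspace_Omega_lt]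
        fa.subspace_scale[OF subspace_Omega_lt]) simp_all
  moreover have "act_even b c (asym as) - subst_sum n b c asym as \<in> Omega_lt n q"
    using act_even_asym[OF as(2) assms(2,3)] Iideal_subset_Omega_lt by blast
  ultimately show "act_even b c (asym as) \<in> Omega_lt n q"
    using fa.subspace_add[OF subspace_Omega_lt] by fastforce
next
  fix i assume "i \<in> Iideal n"
  then show "act_even b c i \<in> Omega_lt n q"
    using act_even_Iideal Iideal_subset_Omega_lt by blast
qed

section \<open>The leading term of the odd action\<close>

definition act_odd_leading :: "nat \<Rightarrow> nat \<Rightarrow> bool" where
  "act_odd_leading n p \<longleftrightarrow> (\<forall>a as. a \<in> {1..2*n} \<longrightarrow> set as \<subseteq> {1..2*n} \<longrightarrow> length as = p \<longrightarrow>
     act_odd a (asym as) - fscale (2 / (of_nat p + 1)) (asym (a # as)) \<in> Omega_lt n p)"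

lemma act_odd_leadingD:
  "act_odd_leading n (length as) \<Longrightarrow> a \<in> {1..2*n} \<Longrightarrow> set as \<subseteq> {1..2*n} \<Longrightarrow>
     act_odd a (asym as) - fscale (2 / (of_nat (length as) + 1)) (asym (a # as)) \<in> Omega_lt n (length as)"
  unfolding act_odd_leading_def by blast

lemma act_odd_Omega_lt:
  assumes leading: "\<And>r. r < q \<Longrightarrow> act_odd_leading n r"
    and x: "x \<in> Omega_lt n q" and a: "a \<in> {1..2*n}"
  shows "act_odd a x \<in> Omega_lt n (Suc q)"
  using x fa_linear_act_odd subspace_Omega_lt
proof (rule Omega_lt_linear_image)
  fix as assume l: "length as < q" and as: "set as \<subseteq> {1..2*n}"
  let ?lead = "fscale (2 / (of_nat (length as) + 1)) (asym (a # as))"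
  have "act_odd a (asym as) - ?lead \<in> Omega_lt n (Suc q)"
    using act_odd_leadingD[OF leading[OF l] a as] Omega_lt_mono[of "length as" "Suc q"] l by auto
  moreover have "?lead \<in> Omega_lt n (Suc q)"
    using l as a by (intro fa.subspace_scale[OF subspace_Omega_lt] asym_in_Omega_lt) auto
  ultimately show "act_odd a (asym as) \<in> Omega_lt n (Suc q)"
    using fa.subspace_add[OF subspace_Omega_lt] by fastforce
next
  fix i assume "i \<in> Iideal n"
  then show "act_odd a i \<in> Omega_lt n (Suc q)"
    using act_odd_Iideal Iideal_subset_Omega_lt by blast
qed

lemma act_odd_act_odd_asym:
  assumes leading: "\<And>r. r \<le> length Z \<Longrightarrow> act_odd_leading n r"
    and a: "a \<in> {1..2*n}" and e: "e \<in> {1..2*n}" and Z: "set Z \<subseteq> {1..2*n}"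
  shows "act_odd a (act_odd e (asym Z)) + fscale (2 / (of_nat (length Z) + 1)) (act_odd e (asym (a # Z)))
    \<in> Omega_lt n (Suc (length Z))"
proof -
  let ?X = "asym Z"
  let ?k = "(2::complex) / (of_nat (length Z) + 1)"
  define anticomm where "anticomm = act_odd a (act_odd e ?X) + act_odd e (act_odd a ?X) - act_even a e ?X"
  define rest where "rest = act_odd a ?X - fscale ?k (asym (a # Z))"
  have "anticomm \<in> Omega_lt n (Suc (length Z))"
    unfolding anticomm_def using act_odd_anticomm[OF asym_homogeneous asym_in_ncpoly a e]
      Iideal_subset_Omega_lt by blast
  moreover have "act_even a e ?X \<in> Omega_lt n (Suc (length Z))"
    using Z a e by (intro act_even_Omega_lt asym_in_Omega_lt) auto
  moreover have "act_odd e rest \<in> Omega_lt n (Suc (length Z))"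
    unfolding rest_def using leading act_odd_leadingD[OF leading[OF order.refl] a Z] e
    by (intro act_odd_Omega_lt) auto
  moreover have "act_odd a (act_odd e ?X) + fscale ?k (act_odd e (asym (a # Z)))
      = anticomm + act_even a e ?X - act_odd e rest"
    unfolding anticomm_def rest_def
    by (simp add: module_hom.diff[OF fa_linear_act_odd] module_hom.scale[OF fa_linear_act_odd] algebra_simps)
  ultimately show ?thesis
    by (simp add: fa.subspace_add[OF subspace_Omega_lt] fa.subspace_diff[OF subspace_Omega_lt])
qed

lemma act_odd_leading_0: "act_odd_leading n 0"
  unfolding act_odd_leading_def
proof (intro allI impI)
  fix a and as :: "nat list" assume "length as = 0"
  then have "act_odd a (asym as) = fscale 2 (sig a)" and "asym (a # as) = sig a"
    using asym_Cons[of a "[]"] act_odd_eq[OF asym_homogeneous, of a as]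
      fa.scale_left_distrib[of 1 1 "sig a"] by simp_all
  then show "act_odd a (asym as) - fscale (2 / (of_nat 0 + 1)) (asym (a # as)) \<in> Omega_lt n 0"
    by (simp add: fa.subspace_0[OF subspace_Omega_lt])
qed

lemma leading_coeff_step:
  fixes m :: nat
  defines "k \<equiv> 2 / (of_nat m + 1 :: complex)"
  assumes V: "fa.subspace V" and combination: "fscale 2 U + fscale k (U - fscale 2 A) \<in> V"
  shows "U - fscale (2 / (of_nat m + 2)) A \<in> V"
proof -
  define M :: complex where "M = of_nat m + 1"
  have M: "M \<noteq> 0" "M + 1 \<noteq> 0"
    unfolding M_def by (metis of_nat_Suc of_nat_neq_0 add.commute)+
  have k: "k = 2 / M" and two_k: "2 + k = 2 * (M + 1) / M" and m2: "of_nat m + 2 = M + 1"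
    using M by (simp_all add: k_def M_def field_simps)
  have "(2 + k) * (2 / (of_nat m + 2)) = 2 * k"
    unfolding two_k m2 k using M by (simp add: divide_simps)
  moreover have "fscale 2 U + fscale k (U - fscale 2 A) = fscale (2 + k) U - fscale (2 * k) A"
    by (simp add: fa.scale_right_diff_distrib fa.scale_left_distrib algebra_simps)
  ultimately have "fscale 2 U + fscale k (U - fscale 2 A) = fscale (2 + k) (U - fscale (2 / (of_nat m + 2)) A)"
    by (simp only: fa.scale_right_diff_distrib fa.scale_scale)
  with combination have "fscale (inverse (2 + k)) (fscale (2 + k) (U - fscale (2 / (of_nat m + 2)) A)) \<in> V"
    by (metis fa.subspace_scale[OF V])
  moreover have "2 + k \<noteq> 0"
    unfolding two_k using M by (simp only: divide_eq_0_iff mult_eq_0_iff) simp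
  ultimately show ?thesis
    by simp
qed

lemma act_odd_leading_Suc:
  assumes leading: "\<And>r. r \<le> m \<Longrightarrow> act_odd_leading n r"
  shows "act_odd_leading n (Suc m)"
  unfolding act_odd_leading_def
proof (intro allI impI)
  fix a and as :: "nat list"
  assume a: "a \<in> {1..2*n}" and as: "set as \<subseteq> {1..2*n}" and l: "length as = Suc m"
  then obtain c cs where as_eq: "as = c # cs" and c: "c \<in> {1..2*n}" and cs: "set cs \<subseteq> {1..2*n}"
    and m: "length cs = m"
    by (cases as) auto
  let ?k = "(2::complex) / (of_nat m + 1)"
  define U where "U = act_odd a (asym (c # cs))"
  define A where "A = asym (a # c # cs)"
  define K where "K e Z = act_odd a (act_odd e (asym Z)) + fscale ?k (act_odd e (asym (a # Z)))" for e Z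
  have K: "K e Z \<in> Omega_lt n (Suc m)" if "e \<in> {1..2*n}" "set Z \<subseteq> {1..2*n}" "length Z = m" for e Z
    unfolding K_def using act_odd_act_odd_asym[OF _ a that(1,2)] leading that(3) by auto
  have "fscale 2 U = act_odd a (act_odd c (asym cs)) - (\<Sum>j<m. act_odd a (act_odd (cs ! j) (asym (cs[j := c]))))"
    unfolding U_def module_hom.scale[OF fa_linear_act_odd, symmetric] two_asym_Cons_eq_act_odd
    by (simp add: module_hom.diff[OF fa_linear_act_odd] module_hom.sum[OF fa_linear_act_odd] m)
  then have "fscale 2 U + fscale ?k (U - fscale 2 A) = K c cs - (\<Sum>j<m. K (cs ! j) (cs[j := c]))"
    unfolding U_def A_def K_def act_odd_asym_Cons_Cons[symmetric]
    by (simp add: m sum.distrib sum_subtractf fa.scale_right_diff_distrib fa.scale_sum_right algebra_simps)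
  also have "\<dots> \<in> Omega_lt n (Suc m)"
  proof (intro fa.subspace_diff[OF subspace_Omega_lt] fa.subspace_sum[OF subspace_Omega_lt] K)
    fix j assume "j \<in> {..<m}"
    then have "cs ! j \<in> set cs"
      using m by simp
    then show "cs ! j \<in> {1..2*n}" "set (cs[j := c]) \<subseteq> {1..2*n}"
      using cs c set_update_subset_insert[of cs j c] by auto
  qed (use c cs m in auto)
  finally have "U - fscale (2 / (of_nat m + 2)) A \<in> Omega_lt n (Suc m)"
    by (rule leading_coeff_step[OF subspace_Omega_lt])
  then show "act_odd a (asym as) - fscale (2 / (of_nat (Suc m) + 1)) (asym (a # as)) \<in> Omega_lt n (Suc m)"
    by (simp add: U_def A_def as_eq add.commute)
qed

lemma act_odd_leading: "act_odd_leading n p"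
proof (induction p rule: less_induct)
  case (less p)
  show ?case
  proof (cases p)
    case 0
    then show ?thesis by (simp add: act_odd_leading_0)
  next
    case (Suc m)
    then show ?thesis
      using less act_odd_leading_Suc[of m n] by simp
  qed
qed

section \<open>Brackets of maximal length\<close>

lemma Omega_eq_span_brackets: "Omega n = fa.span (brackets n (Suc (2*n)))"
proof -
  have "{asym as | as. length as \<le> 2*n \<and> set as \<subseteq> {1..2*n}} = brackets n (Suc (2*n))"
    unfolding brackets_def by (auto simp: less_Suc_eq_le)
  then show ?thesis
    unfolding Omega_def fspan_eq_span by simp
qed

lemma Omega_subset_Omega_lt: "Omega n \<subseteq> Omega_lt n (Suc (2*n))"
  unfolding Omega_eq_span_brackets Omega_lt_def by (rule fa.span_mono) simp

lemma Omega_lt_decompose: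
  assumes "x \<in> Omega_lt n (Suc (2*n))"
  shows "\<exists>y\<in>Omega n. x - y \<in> Iideal n"
proof -
  from assms obtain y i where "y \<in> fa.span (brackets n (Suc (2*n)))" "i \<in> fa.span (ideal_gens n)" "x = y + i"
    unfolding Omega_lt_def fa.span_Un by blast
  then show ?thesis
    unfolding Omega_eq_span_brackets Iideal_eq_span by (intro bexI[of _ y]) auto
qed

lemma Omega_lt_Suc_top: "Omega_lt n (Suc (Suc (2*n))) \<subseteq> Omega_lt n (Suc (2*n))"
proof
  fix x assume x: "x \<in> Omega_lt n (Suc (Suc (2*n)))"
  have "fa_linear id"
    by (rule fa_linearI) simp_all
  with x have "id x \<in> Omega_lt n (Suc (2*n))"
    using subspace_Omega_lt
  proof (rule Omega_lt_linear_image)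
    fix as assume l: "length as < Suc (Suc (2*n))" and as: "set as \<subseteq> {1..2*n}"
    show "id (asym as) \<in> Omega_lt n (Suc (2*n))"
    proof (cases "length as = Suc (2*n)")
      case True
      have "\<not> distinct as"
      proof
        assume "distinct as"
        then have "card (set as) = Suc (2*n)"
          using True distinct_card by fastforce
        moreover have "card (set as) \<le> 2*n"
          using card_mono[OF _ as] by simp
        ultimately show False
          by simp
      qed
      then show ?thesis
        by (simp add: asym_eq_0_if_not_distinct fa.subspace_0[OF subspace_Omega_lt])
    next
      case False
      then show ?thesis
        using l as by (simp add: asym_in_Omega_lt)
    qed
  next
    fix i assume "i \<in> Iideal n"
    then show "id i \<in> Omega_lt n (Suc (2*n))"
      using Iideal_subset_Omega_lt by auto
  qed
  then show "x \<in> Omega_lt n (Suc (2*n))"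
    by simp
qed

theorem proposition3:
  fixes n :: nat
  assumes "n \<ge> 1"
  shows "(\<forall>a\<in>{1..2*n}. \<forall>x\<in>Omega n. \<exists>y\<in>Omega n. act_odd a x - y \<in> Iideal n)
       \<and> (\<forall>a\<in>{1..2*n}. \<forall>b\<in>{1..2*n}. \<forall>x\<in>Omega n. \<exists>y\<in>Omega n. act_even a b x - y \<in> Iideal n)"
proof (intro conjI ballI)
  fix a x assume "a \<in> {1..2*n}" "x \<in> Omega n"
  then have "act_odd a x \<in> Omega_lt n (Suc (Suc (2*n)))"
    using Omega_subset_Omega_lt act_odd_leading by (intro act_odd_Omega_lt) auto
  then show "\<exists>y\<in>Omega n. act_odd a x - y \<in> Iideal n"
    using Omega_lt_Suc_top by (intro Omega_lt_decompose) auto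
next
  fix a b x assume "a \<in> {1..2*n}" "b \<in> {1..2*n}" "x \<in> Omega n"
  then show "\<exists>y\<in>Omega n. act_even a b x - y \<in> Iideal n"
    using Omega_subset_Omega_lt by (intro Omega_lt_decompose act_even_Omega_lt) auto
qed

end
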